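(* Let $G_i\leq\mathrm{Sym}(n_i)$ for $1\leq i\leq k$ and let $G=G_1\times\cdots\times G_k$ be their external direct product acting on $[n_1]\times\cdots\times[n_k]$ by $(x_1,\dots,x_k)^{(g_1,\dots,g_k)}=(x_1^{g_1},\dots,x_k^{g_k})$. Then \[\alpha(\Gamma_G)=\alpha(\Gamma_{G_1})\cdots\alpha(\Gamma_{G_k}).\]
   Context: For a permutation group $G$ acting on a set, the derangement graph $\Gamma_G$ has vertex set $G$, with $\sigma,\pi$ adjacent iff $\sigma\pi^{-1}$ has no fixed point. $\alpha(X)$ denotes the size of a largest independent set in a graph $X$. *)

theory Defs
  imports "HOL-Combinatorics.Permutations" "HOL-Library.FuncSet"
begin

definition perm_group :: "'a set \<Rightarrow> ('a \<Rightarrow> 'a) set \<Rightarrow> bool" where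
  "perm_group \<Omega> G \<longleftrightarrow> G \<subseteq> {f. f permutes \<Omega>} \<and> id \<in> G \<and>
     (\<forall>f\<in>G. \<forall>g\<in>G. f \<circ> g \<in> G) \<and> (\<forall>f\<in>G. inv f \<in> G)"

definition derangement :: "'a set \<Rightarrow> ('a \<Rightarrow> 'a) \<Rightarrow> bool" where
  "derangement \<Omega> f \<longleftrightarrow> (\<forall>x\<in>\<Omega>. f x \<noteq> x)"

text \<open>Adjacency in the derangement graph: sigma pi^-1 has no fixed point
  (right-action convention: x^(sigma pi^-1) = pi^-1 (sigma x)).\<close>
definition derangement_adj :: "'a set \<Rightarrow> ('a \<Rightarrow> 'a) \<Rightarrow> ('a \<Rightarrow> 'a) \<Rightarrow> bool" where
  "derangement_adj \<Omega> \<sigma> \<pi> \<longleftrightarrow> derangement \<Omega> (inv \<pi> \<circ> \<sigma>)"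

definition indep_set :: "'a set \<Rightarrow> ('a \<Rightarrow> 'a) set \<Rightarrow> ('a \<Rightarrow> 'a) set \<Rightarrow> bool" where
  "indep_set \<Omega> G S \<longleftrightarrow> S \<subseteq> G \<and>
     (\<forall>\<sigma>\<in>S. \<forall>\<pi>\<in>S. \<sigma> \<noteq> \<pi> \<longrightarrow> \<not> derangement_adj \<Omega> \<sigma> \<pi>)"

definition alpha_der :: "'a set \<Rightarrow> ('a \<Rightarrow> 'a) set \<Rightarrow> nat" where
  "alpha_der \<Omega> G = Max {card S | S. indep_set \<Omega> G S}"

definition prod_points :: "nat \<Rightarrow> (nat \<Rightarrow> nat) \<Rightarrow> (nat \<Rightarrow> nat) set" where
  "prod_points k n = PiE {..<k} (\<lambda>i. {..<n i})"

definition prod_perm :: "nat \<Rightarrow> (nat \<Rightarrow> nat) \<Rightarrow> (nat \<Rightarrow> nat \<Rightarrow> nat) \<Rightarrow> (nat \<Rightarrow> nat) \<Rightarrow> (nat \<Rightarrow> nat)" where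
  "prod_perm k n g x = (if x \<in> prod_points k n then restrict (\<lambda>i. g i (x i)) {..<k} else x)"

definition prod_group :: "nat \<Rightarrow> (nat \<Rightarrow> nat) \<Rightarrow> (nat \<Rightarrow> (nat \<Rightarrow> nat) set) \<Rightarrow> ((nat \<Rightarrow> nat) \<Rightarrow> (nat \<Rightarrow> nat)) set" where
  "prod_group k n G = prod_perm k n ` PiE {..<k} G"

end

theory Submission
  imports Defs
begin

text \<open>Two permutations are non-adjacent in the derangement graph exactly when they agree
  at some point, so independent sets are intersecting families. A tuple of permutations
  agrees with another one at some point of the product set iff it agrees in every
  coordinate, hence a family of tuples is intersecting iff every coordinate projection
  is. Projecting a maximum independent set of the product onto the factors gives the
  upper bound, and the product of maximum independent sets of the factors the lower bound.\<close>

definition intersecting :: "'a set \<Rightarrow> ('a \<Rightarrow> 'a) set \<Rightarrow> bool" where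
  "intersecting \<Omega> S \<longleftrightarrow> (\<forall>\<sigma>\<in>S. \<forall>\<pi>\<in>S. \<exists>x\<in>\<Omega>. \<sigma> x = \<pi> x)"

lemma intersecting_subset: "intersecting \<Omega> S \<Longrightarrow> T \<subseteq> S \<Longrightarrow> intersecting \<Omega> T"
  unfolding intersecting_def by blast

lemma not_derangement_adj_iff:
  assumes "bij \<pi>"
  shows "\<not> derangement_adj \<Omega> \<sigma> \<pi> \<longleftrightarrow> (\<exists>x\<in>\<Omega>. \<sigma> x = \<pi> x)"
proof -
  have "inv \<pi> (\<sigma> x) = x \<longleftrightarrow> \<sigma> x = \<pi> x" for x
    using bij_inv_eq_iff[OF assms] by metis
  thus ?thesis by (simp add: derangement_adj_def derangement_def)
qed

lemma indep_set_iff_intersecting: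
  assumes "\<Omega> \<noteq> {}" and "\<And>\<pi>. \<pi> \<in> G \<Longrightarrow> bij \<pi>"
  shows "indep_set \<Omega> G S \<longleftrightarrow> S \<subseteq> G \<and> intersecting \<Omega> S"
proof -
  have key: "(\<sigma> \<noteq> \<pi> \<longrightarrow> \<not> derangement_adj \<Omega> \<sigma> \<pi>) \<longleftrightarrow> (\<exists>x\<in>\<Omega>. \<sigma> x = \<pi> x)"
    if "\<pi> \<in> G" for \<sigma> \<pi>
    using that assms not_derangement_adj_iff by blast
  show ?thesis
  proof (cases "S \<subseteq> G")
    case True
    hence "(\<forall>\<sigma>\<in>S. \<forall>\<pi>\<in>S. \<sigma> \<noteq> \<pi> \<longrightarrow> \<not> derangement_adj \<Omega> \<sigma> \<pi>) \<longleftrightarrow> intersecting \<Omega> S"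
      unfolding intersecting_def using key by blast
    with True show ?thesis by (simp add: indep_set_def)
  qed (simp add: indep_set_def)
qed

lemma finite_indep_set_cards:
  assumes "finite G"
  shows "finite {card S | S. indep_set \<Omega> G S}"
proof -
  have "{card S | S. indep_set \<Omega> G S} \<subseteq> {..card G}"
  proof
    fix c assume "c \<in> {card S | S. indep_set \<Omega> G S}"
    then obtain S where "c = card S" "S \<subseteq> G" by (auto simp: indep_set_def)
    thus "c \<in> {..card G}" using card_mono[OF assms] by simp
  qed
  thus ?thesis by (rule finite_subset) simp
qed

lemma card_le_alpha_der:
  assumes "finite G" and "indep_set \<Omega> G S"
  shows "card S \<le> alpha_der \<Omega> G"
  unfolding alpha_der_def using assms(2) by (intro Max_ge[OF finite_indep_set_cards[OF assms(1)]]) blast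

lemma alpha_der_attained:
  assumes "finite G"
  obtains S where "indep_set \<Omega> G S" and "card S = alpha_der \<Omega> G"
proof -
  have "indep_set \<Omega> G {}" by (simp add: indep_set_def)
  hence "alpha_der \<Omega> G \<in> {card S | S. indep_set \<Omega> G S}"
    unfolding alpha_der_def by (intro Max_in[OF finite_indep_set_cards[OF assms]]) blast
  then obtain S where "indep_set \<Omega> G S" "card S = alpha_der \<Omega> G" by auto
  with that show ?thesis by blast
qed

lemma finite_perm_group:
  assumes "perm_group \<Omega> G" and "finite \<Omega>"
  shows "finite G"
proof -
  have "G \<subseteq> {f. f permutes \<Omega>}" using assms(1) by (simp add: perm_group_def)
  thus ?thesis by (rule finite_subset) (simp add: finite_permutations assms(2))
qed

lemma perm_group_permutes: "perm_group \<Omega> G \<Longrightarrow> \<pi> \<in> G \<Longrightarrow> \<pi> permutes \<Omega>"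
  unfolding perm_group_def by blast

lemma prod_perm_apply:
  "x \<in> prod_points k n \<Longrightarrow> i < k \<Longrightarrow> prod_perm k n g x i = g i (x i)"
  by (simp add: prod_perm_def)

lemma prod_perm_cong:
  "(\<And>i. i < k \<Longrightarrow> f i = g i) \<Longrightarrow> prod_perm k n f = prod_perm k n g"
  unfolding prod_perm_def by (intro ext) (auto intro: restrict_ext)

lemma prod_perm_id: "prod_perm k n (\<lambda>i. id) = id"
  by (intro ext) (auto simp: prod_perm_def prod_points_def PiE_restrict)

lemma prod_perm_comp:
  assumes "\<And>i y. i < k \<Longrightarrow> y < n i \<Longrightarrow> g i y < n i"
  shows "prod_perm k n f \<circ> prod_perm k n g = prod_perm k n (\<lambda>i. f i \<circ> g i)"
proof
  fix x
  show "(prod_perm k n f \<circ> prod_perm k n g) x = prod_perm k n (\<lambda>i. f i \<circ> g i) x"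
  proof (cases "x \<in> prod_points k n")
    case True
    hence "prod_perm k n g x \<in> prod_points k n"
      using assms by (auto simp: prod_perm_def prod_points_def)
    with True show ?thesis by (auto simp: prod_perm_def intro!: restrict_ext)
  qed (simp add: prod_perm_def)
qed

lemma bij_prod_perm:
  assumes "\<And>i. i < k \<Longrightarrow> g i permutes {..<n i}"
  shows "bij (prod_perm k n g)"
proof (rule o_bij)
  have maps: "\<And>i y. i < k \<Longrightarrow> y < n i \<Longrightarrow> g i y < n i"
    using assms permutes_in_image by fastforce
  have maps_inv: "\<And>i y. i < k \<Longrightarrow> y < n i \<Longrightarrow> inv (g i) y < n i"
    using assms permutes_inv permutes_in_image by fastforce
  have "prod_perm k n (\<lambda>i. inv (g i)) \<circ> prod_perm k n g = prod_perm k n (\<lambda>i. inv (g i) \<circ> g i)"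
    by (rule prod_perm_comp[OF maps])
  also have "\<dots> = prod_perm k n (\<lambda>i. id)"
    using assms permutes_inv_o(2) by (intro prod_perm_cong) blast
  finally show "prod_perm k n (\<lambda>i. inv (g i)) \<circ> prod_perm k n g = id"
    by (simp add: prod_perm_id)
  have "prod_perm k n g \<circ> prod_perm k n (\<lambda>i. inv (g i)) = prod_perm k n (\<lambda>i. g i \<circ> inv (g i))"
    by (rule prod_perm_comp[OF maps_inv])
  also have "\<dots> = prod_perm k n (\<lambda>i. id)"
    using assms permutes_inv_o(1) by (intro prod_perm_cong) blast
  finally show "prod_perm k n g \<circ> prod_perm k n (\<lambda>i. inv (g i)) = id"
    by (simp add: prod_perm_id)
qed

lemma prod_perm_agree_iff:
  "(\<exists>x\<in>prod_points k n. prod_perm k n g x = prod_perm k n g' x) \<longleftrightarrow>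
   (\<forall>i<k. \<exists>y\<in>{..<n i}. g i y = g' i y)"
proof
  assume "\<exists>x\<in>prod_points k n. prod_perm k n g x = prod_perm k n g' x"
  then obtain x where x: "x \<in> prod_points k n" "prod_perm k n g x = prod_perm k n g' x"
    by blast
  have "g i (x i) = g' i (x i)" if "i < k" for i
    using x that by (metis prod_perm_apply)
  moreover have "x i < n i" if "i < k" for i
    using x that by (auto simp: prod_points_def)
  ultimately show "\<forall>i<k. \<exists>y\<in>{..<n i}. g i y = g' i y" by blast
next
  assume "\<forall>i<k. \<exists>y\<in>{..<n i}. g i y = g' i y"
  hence "\<forall>i. \<exists>y. i < k \<longrightarrow> y < n i \<and> g i y = g' i y" by auto
  from choice[OF this] obtain y where y: "\<And>i. i < k \<Longrightarrow> y i < n i \<and> g i (y i) = g' i (y i)"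
    by blast
  define x where "x = restrict y {..<k}"
  have x: "x \<in> prod_points k n" using y by (simp add: x_def prod_points_def)
  have "prod_perm k n g x = prod_perm k n g' x"
    using x y by (auto simp: prod_perm_def x_def intro!: restrict_ext)
  with x show "\<exists>x\<in>prod_points k n. prod_perm k n g x = prod_perm k n g' x" by blast
qed

lemma intersecting_image_iff:
  "intersecting \<Omega> (f ` T) \<longleftrightarrow> (\<forall>a\<in>T. \<forall>b\<in>T. \<exists>x\<in>\<Omega>. f a x = f b x)"
  unfolding intersecting_def by blast

lemma intersecting_prod_perm_image_iff:
  "intersecting (prod_points k n) (prod_perm k n ` T) \<longleftrightarrow>
   (\<forall>i<k. intersecting {..<n i} ((\<lambda>g. g i) ` T))"
  unfolding intersecting_image_iff prod_perm_agree_iff by blast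

lemma inj_on_prod_perm:
  assumes n: "\<And>i. i < k \<Longrightarrow> n i \<ge> 1"
    and perm: "\<And>i. i < k \<Longrightarrow> \<forall>g\<in>G i. g permutes {..<n i}"
  shows "inj_on (prod_perm k n) (PiE {..<k} G)"
proof (rule inj_onI)
  fix g g' assume g: "g \<in> PiE {..<k} G" and g': "g' \<in> PiE {..<k} G"
    and eq: "prod_perm k n g = prod_perm k n g'"
  have "g i y = g' i y" if i: "i < k" and y: "y < n i" for i y
  proof -
    define x where "x = restrict (\<lambda>j. if j = i then y else 0) {..<k}"
    have "x \<in> prod_points k n" using n y by (auto simp: x_def prod_points_def Suc_le_eq)
    hence "prod_perm k n g x i = g i y" "prod_perm k n g' x i = g' i y"
      using i by (simp_all add: prod_perm_apply x_def)
    thus ?thesis using eq by simp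
  qed
  moreover have "g i y = g' i y" if i: "i < k" and y: "\<not> y < n i" for i y
    using perm[OF i] g g' i y by (metis PiE_mem lessThan_iff permutes_not_in)
  ultimately show "g = g'"
    by (intro PiE_ext[OF g g'] ext) (metis lessThan_iff)
qed

context
  fixes k :: nat and n :: "nat \<Rightarrow> nat" and G :: "nat \<Rightarrow> (nat \<Rightarrow> nat) set"
  assumes n_pos: "\<And>i. i < k \<Longrightarrow> n i \<ge> 1"
      and perm_group: "\<And>i. i < k \<Longrightarrow> perm_group {..<n i} (G i)"
begin

lemma factor_permutes: "i < k \<Longrightarrow> \<forall>g\<in>G i. g permutes {..<n i}"
  using perm_group perm_group_permutes by blast

lemma finite_factor: "i < k \<Longrightarrow> finite (G i)"
  using perm_group finite_perm_group by blast

lemma finite_prod_group: "finite (prod_group k n G)"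
  unfolding prod_group_def by (intro finite_imageI finite_PiE) (simp_all add: finite_factor)

lemma inj_on_prod_perm_factors: "inj_on (prod_perm k n) (PiE {..<k} G)"
  by (rule inj_on_prod_perm[OF n_pos factor_permutes])

lemma indep_set_factor_iff:
  "i < k \<Longrightarrow> indep_set {..<n i} (G i) S \<longleftrightarrow> S \<subseteq> G i \<and> intersecting {..<n i} S"
  using n_pos factor_permutes permutes_bij by (intro indep_set_iff_intersecting) fastforce+

lemma indep_set_prod_group_iff:
  assumes "T \<subseteq> PiE {..<k} G"
  shows "indep_set (prod_points k n) (prod_group k n G) (prod_perm k n ` T) \<longleftrightarrow>
         (\<forall>i<k. intersecting {..<n i} ((\<lambda>g. g i) ` T))"
proof -
  have "restrict (\<lambda>i. 0) {..<k} \<in> prod_points k n"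
    using n_pos by (auto simp: prod_points_def Suc_le_eq)
  hence "prod_points k n \<noteq> {}" by blast
  moreover have "bij \<pi>" if "\<pi> \<in> prod_group k n G" for \<pi>
    using that factor_permutes by (auto simp: prod_group_def intro!: bij_prod_perm)
  ultimately show ?thesis
    using assms by (simp add: indep_set_iff_intersecting intersecting_prod_perm_image_iff
        prod_group_def image_mono)
qed

lemma alpha_der_prod_group_le:
  "alpha_der (prod_points k n) (prod_group k n G) \<le> (\<Prod>i<k. alpha_der {..<n i} (G i))"
proof -
  obtain T where T: "indep_set (prod_points k n) (prod_group k n G) T"
    and card_T: "card T = alpha_der (prod_points k n) (prod_group k n G)"
    using alpha_der_attained[OF finite_prod_group] by blast
  define T' where "T' = {g \<in> PiE {..<k} G. prod_perm k n g \<in> T}"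
  define S where "S i = (\<lambda>g. g i) ` T'" for i
  have T': "T' \<subseteq> PiE {..<k} G" by (auto simp: T'_def)
  have T_eq: "T = prod_perm k n ` T'"
    using T unfolding T'_def indep_set_def prod_group_def by auto
  have "card T = card T'"
    unfolding T_eq by (rule card_image[OF inj_on_subset[OF inj_on_prod_perm_factors T']])
  also have "\<dots> \<le> card (PiE {..<k} S)"
  proof (rule card_mono)
    show "finite (PiE {..<k} S)"
      using T' finite_factor by (intro finite_PiE) (auto simp: S_def PiE_iff intro: finite_subset)
    show "T' \<subseteq> PiE {..<k} S"
      using T' by (auto simp: S_def PiE_iff)
  qed
  also have "\<dots> = (\<Prod>i<k. card (S i))" by (simp add: card_PiE)
  also have "\<dots> \<le> (\<Prod>i<k. alpha_der {..<n i} (G i))"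
  proof (rule prod_mono)
    fix i assume "i \<in> {..<k}"
    hence i: "i < k" by simp
    have "S i \<subseteq> G i" using T' i by (auto simp: S_def PiE_iff)
    moreover have "intersecting {..<n i} (S i)"
      using T T_eq i indep_set_prod_group_iff[OF T'] by (simp add: S_def)
    ultimately have "indep_set {..<n i} (G i) (S i)" by (simp add: indep_set_factor_iff[OF i])
    thus "0 \<le> card (S i) \<and> card (S i) \<le> alpha_der {..<n i} (G i)"
      using card_le_alpha_der[OF finite_factor[OF i]] by simp
  qed
  finally show ?thesis using card_T by simp
qed

lemma prod_le_alpha_der_prod_group:
  "(\<Prod>i<k. alpha_der {..<n i} (G i)) \<le> alpha_der (prod_points k n) (prod_group k n G)"
proof -
  have "\<forall>i. \<exists>S. i < k \<longrightarrow> indep_set {..<n i} (G i) S \<and> card S = alpha_der {..<n i} (G i)"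
    using alpha_der_attained[OF finite_factor] by blast
  from choice[OF this] obtain S
    where "\<forall>i. i < k \<longrightarrow> indep_set {..<n i} (G i) (S i) \<and> card (S i) = alpha_der {..<n i} (G i)"
    by blast
  hence S: "\<And>i. i < k \<Longrightarrow> indep_set {..<n i} (G i) (S i)"
    and card_S: "\<And>i. i < k \<Longrightarrow> card (S i) = alpha_der {..<n i} (G i)"
    by blast+
  have sub: "PiE {..<k} S \<subseteq> PiE {..<k} G"
    using S by (intro PiE_mono) (simp add: indep_set_def)
  have "intersecting {..<n i} ((\<lambda>g. g i) ` PiE {..<k} S)" if i: "i < k" for i
  proof (rule intersecting_subset)
    show "intersecting {..<n i} (S i)" using S[OF i] by (simp add: indep_set_factor_iff[OF i])
    show "(\<lambda>g. g i) ` PiE {..<k} S \<subseteq> S i" using i by (auto simp: PiE_iff)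
  qed
  hence "indep_set (prod_points k n) (prod_group k n G) (prod_perm k n ` PiE {..<k} S)"
    by (simp add: indep_set_prod_group_iff[OF sub])
  hence "card (prod_perm k n ` PiE {..<k} S) \<le> alpha_der (prod_points k n) (prod_group k n G)"
    by (rule card_le_alpha_der[OF finite_prod_group])
  moreover have "card (prod_perm k n ` PiE {..<k} S) = (\<Prod>i<k. alpha_der {..<n i} (G i))"
    by (simp add: card_image[OF inj_on_subset[OF inj_on_prod_perm_factors sub]] card_PiE card_S)
  ultimately show ?thesis by simp
qed

end

theorem lemma14:
  fixes k :: nat and n :: "nat \<Rightarrow> nat" and G :: "nat \<Rightarrow> (nat \<Rightarrow> nat) set"
  assumes "\<And>i. i < k \<Longrightarrow> n i \<ge> 1"
      and "\<And>i. i < k \<Longrightarrow> perm_group {..<n i} (G i)"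
  shows "alpha_der (prod_points k n) (prod_group k n G)
           = (\<Prod>i<k. alpha_der {..<n i} (G i))"
  using alpha_der_prod_group_le[OF assms] prod_le_alpha_der_prod_group[OF assms]
  by (rule antisym)

end
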